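(* Let $X\subseteq\mathbb{R}^{\mathbb{Z}_<}$, $f:X\to\mathbb{R}^{\mathbb{Z}_<}$ and $x_0\in X$. Then $f$ is $\iota$-continuous at $x_0$ if and only if for every sequence $(x_n)$ in $X$ with $\mathrm{HC}(x_n,x_0)$, the sequence $(f(x_n))$ satisfies $\mathrm{HC}(f(x_n),f(x_0))$.
   Context: $\mathbb{R}^{\mathbb{Z}_<}$ is the set of formal series $\sum_{i\ge -k}a_i\epsilon^i$ ($k\in\mathbb{N}\cup\{0\}$, $a_i\in\mathbb{R}$), with coefficientwise addition, Cauchy-product multiplication and lexicographic order; $|\cdot|$ is the associated absolute value. $f$ is $\iota$-continuous at $x_0$ means: for every positive $\iota_1\in\mathbb{R}^{\mathbb{Z}_<}$ there is a positive $\iota_2\in\mathbb{R}^{\mathbb{Z}_<}$ such that $x\in X$ and $|x-x_0|<\iota_2$ imply $|f(x)-f(x_0)|<\iota_1$. $\mathrm{HC}(s_n,s)$ (hyperconvergence) means: for every $r\in\mathbb{R}^{\mathbb{Z}_<}$ with $r>0$ there is $N$ such that $|s_n-s|<r$ for all $n>N$. *)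

theory Defs
  imports "HOL-Computational_Algebra.Formal_Laurent_Series"
begin

text \<open>The field R^{Z<}: formal Laurent series with finite principal part,
  i.e. type real fls (coefficient of eps^i is fls_nth x i).\<close>

type_synonym lc = "real fls"

definition lc_less :: "lc \<Rightarrow> lc \<Rightarrow> bool" where
  "lc_less x y \<longleftrightarrow> (\<exists>i. fls_nth x i < fls_nth y i \<and> (\<forall>j<i. fls_nth x j = fls_nth y j))"

definition lc_abs :: "lc \<Rightarrow> lc" where
  "lc_abs x = (if lc_less x 0 then - x else x)"

definition iota_continuous_at :: "lc set \<Rightarrow> (lc \<Rightarrow> lc) \<Rightarrow> lc \<Rightarrow> bool" where
  "iota_continuous_at X f x0 \<longleftrightarrow>
     (\<forall>i1. lc_less 0 i1 \<longrightarrow> (\<exists>i2. lc_less 0 i2 \<and>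
        (\<forall>x\<in>X. lc_less (lc_abs (x - x0)) i2 \<longrightarrow> lc_less (lc_abs (f x - f x0)) i1)))"

definition HC :: "(nat \<Rightarrow> lc) \<Rightarrow> lc \<Rightarrow> bool" where
  "HC s l \<longleftrightarrow> (\<forall>r. lc_less 0 r \<longrightarrow> (\<exists>N. \<forall>n>N. lc_less (lc_abs (s n - l)) r))"

end

theory Submission
  imports Defs
begin

text \<open>For the converse,
  the powers \<open>\<epsilon>\<^sup>n\<close> are positive and tend to \<open>0\<close> in the strong sense that every
  positive \<open>r\<close> exceeds \<open>\<epsilon>\<^sup>n\<close> once \<open>n\<close> passes the index of the leading
  coefficient of \<open>r\<close>. If \<open>f\<close> is not \<open>\<iota>\<close>-continuous, picking for every \<open>n\<close> a
  witness of discontinuity within distance \<open>\<epsilon>\<^sup>n\<close> of \<open>x\<^sub>0\<close> thus yields a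
  hyperconvergent sequence whose image does not hyperconverge.\<close>

lemma lc_less_trans:
  assumes "lc_less x y" "lc_less y z"
  shows "lc_less x z"
proof -
  obtain i where i: "fls_nth x i < fls_nth y i" "\<forall>j<i. fls_nth x j = fls_nth y j"
    using assms(1) unfolding lc_less_def by blast
  obtain k where k: "fls_nth y k < fls_nth z k" "\<forall>j<k. fls_nth y j = fls_nth z j"
    using assms(2) unfolding lc_less_def by blast
  have "fls_nth x (min i k) < fls_nth z (min i k) \<and> (\<forall>j<min i k. fls_nth x j = fls_nth z j)"
    using i k by (cases i k rule: linorder_cases) auto
  then show ?thesis
    unfolding lc_less_def by blast
qed

lemma lc_less_zero_fls_X_power: "lc_less 0 (fls_X ^ n)"
  unfolding lc_less_def by (intro exI[of _ "int n"]) auto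

lemma fls_X_power_eventually_lc_less:
  assumes "lc_less 0 r"
  shows "\<exists>N. \<forall>n>N. lc_less (fls_X ^ n) r"
proof -
  obtain k where k: "0 < fls_nth r k" "\<forall>j<k. fls_nth r j = 0"
    using assms unfolding lc_less_def by auto
  have "lc_less (fls_X ^ n) r" if "n > nat k" for n
    using k that unfolding lc_less_def by (intro exI[of _ k]) auto
  then show ?thesis
    by blast
qed

lemma HC_if_dist_lc_less_fls_X_power:
  assumes "\<And>n. lc_less (lc_abs (xs n - x0)) (fls_X ^ n)"
  shows "HC xs x0"
  unfolding HC_def
  using assms fls_X_power_eventually_lc_less lc_less_trans by meson

lemma HC_comp_if_iota_continuous_at:
  assumes cont: "iota_continuous_at X f x0"
    and in_X: "\<And>n. xs n \<in> X" and conv: "HC xs x0"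
  shows "HC (\<lambda>n. f (xs n)) (f x0)"
  unfolding HC_def
proof (intro allI impI)
  fix r
  assume "lc_less 0 r"
  then obtain d where "lc_less 0 d"
    and d: "\<forall>x\<in>X. lc_less (lc_abs (x - x0)) d \<longrightarrow> lc_less (lc_abs (f x - f x0)) r"
    using cont unfolding iota_continuous_at_def by blast
  then obtain N where "\<forall>n>N. lc_less (lc_abs (xs n - x0)) d"
    using conv unfolding HC_def by blast
  then show "\<exists>N. \<forall>n>N. lc_less (lc_abs (f (xs n) - f x0)) r"
    using d in_X by blast
qed

lemma iota_continuous_at_if_HC_comp:
  assumes seq: "\<And>xs. (\<And>n. xs n \<in> X) \<Longrightarrow> HC xs x0 \<Longrightarrow> HC (\<lambda>n. f (xs n)) (f x0)"
  shows "iota_continuous_at X f x0"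
proof (rule ccontr)
  assume "\<not> iota_continuous_at X f x0"
  then obtain r where r: "lc_less 0 r"
    and bad: "\<And>d. lc_less 0 d \<Longrightarrow> \<exists>x\<in>X. lc_less (lc_abs (x - x0)) d \<and>
                 \<not> lc_less (lc_abs (f x - f x0)) r"
    unfolding iota_continuous_at_def by blast
  obtain xs where in_X: "\<And>n. xs n \<in> X"
    and close: "\<And>n. lc_less (lc_abs (xs n - x0)) (fls_X ^ n)"
    and far: "\<And>n. \<not> lc_less (lc_abs (f (xs n) - f x0)) r"
    using bad[OF lc_less_zero_fls_X_power] by metis
  have "HC (\<lambda>n. f (xs n)) (f x0)"
    using seq in_X HC_if_dist_lc_less_fls_X_power close by blast
  then obtain N where "\<forall>n>N. lc_less (lc_abs (f (xs n) - f x0)) r"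
    using r unfolding HC_def by blast
  then show False
    using far[of "Suc N"] by simp
qed

theorem mainTheorem16:
  fixes X :: "lc set" and f :: "lc \<Rightarrow> lc" and x0 :: lc
  assumes "x0 \<in> X"
  shows "iota_continuous_at X f x0 \<longleftrightarrow>
    (\<forall>xs. (\<forall>n. xs n \<in> X) \<longrightarrow> HC xs x0 \<longrightarrow> HC (\<lambda>n. f (xs n)) (f x0))"
  using HC_comp_if_iota_continuous_at iota_continuous_at_if_HC_comp by blast

end
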